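(* Let $G=(V,E)$ be a graph with adjacency matrix $A$, let $k$ be a positive integer and $C=\{1,\dots,k\}$. Then $G$ is $k$-colorable if and only if there exists $x\in\{0,1\}^{V\times C}$ such that $\sum_{j\in C}x_{ij}=1$ for all $i\in V$, and $\sum_{i\in V}A_{pi}x_{ij}\le |E|(1-x_{pj})$ for all $p\in V$ and $j\in C$. *)

theory Defs
  imports Main
begin

definition simple_graph :: "'a set \<Rightarrow> ('a \<Rightarrow> 'a \<Rightarrow> bool) \<Rightarrow> bool" where
  "simple_graph V E \<longleftrightarrow> finite V \<and> (\<forall>u v. E u v \<longrightarrow> u \<in> V \<and> v \<in> V)
     \<and> (\<forall>u v. E u v \<longrightarrow> E v u) \<and> (\<forall>v. \<not> E v v)"

definition adj :: "('a \<Rightarrow> 'a \<Rightarrow> bool) \<Rightarrow> 'a \<Rightarrow> 'a \<Rightarrow> nat" where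
  "adj E p i = (if E p i then 1 else 0)"

definition edges :: "('a \<Rightarrow> 'a \<Rightarrow> bool) \<Rightarrow> 'a set set" where
  "edges E = {{u, v} | u v. E u v}"

definition num_edges :: "('a \<Rightarrow> 'a \<Rightarrow> bool) \<Rightarrow> nat" where
  "num_edges E = card (edges E)"

definition colorable :: "'a set \<Rightarrow> ('a \<Rightarrow> 'a \<Rightarrow> bool) \<Rightarrow> nat \<Rightarrow> bool" where
  "colorable V E k \<longleftrightarrow> (\<exists>c. (\<forall>v\<in>V. c v \<in> {1..k}) \<and> (\<forall>u\<in>V. \<forall>v\<in>V. E u v \<longrightarrow> c u \<noteq> c v))"

end

theory Submission
  imports Defs
begin

text \<open>Encode a colouring c by the indicator variables x i j = [c i = j]. The constraint
  row (p, j) is vacuous when p does not have colour j, because its left side counts at most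
  the neighbours of p and the degree of p is at most |E|; when p has colour j it says that
  no neighbour of p has colour j. Conversely, every vertex has exactly one colour j with
  x i j = 1, and the constraint for that colour makes the colouring proper.\<close>

definition coloring_ilp_solution ::
    "'a set \<Rightarrow> ('a \<Rightarrow> 'a \<Rightarrow> bool) \<Rightarrow> nat \<Rightarrow> ('a \<Rightarrow> nat \<Rightarrow> int) \<Rightarrow> bool" where
  "coloring_ilp_solution V E k x \<longleftrightarrow>
     (\<forall>i\<in>V. \<forall>j\<in>{1..k}. x i j \<in> {0, 1}) \<and>
     (\<forall>i\<in>V. (\<Sum>j\<in>{1..k}. x i j) = 1) \<and>
     (\<forall>p\<in>V. \<forall>j\<in>{1..k}.
        (\<Sum>i\<in>V. int (adj E p i) * x i j) \<le> int (num_edges E) * (1 - x p j))"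

lemma finite_edges:
  assumes "simple_graph V E"
  shows "finite (edges E)"
proof -
  have "edges E \<subseteq> Pow V"
    using assms by (auto simp: edges_def simple_graph_def)
  then show ?thesis
    using assms by (meson finite_Pow_iff finite_subset simple_graph_def)
qed

lemma card_neighbours_le_num_edges:
  assumes "simple_graph V E"
  shows "card {i\<in>V. E p i} \<le> num_edges E"
proof -
  have "inj_on (\<lambda>i. {p, i}) {i\<in>V. E p i}"
  proof (rule inj_onI)
    fix a b
    assume "a \<in> {i\<in>V. E p i}" "b \<in> {i\<in>V. E p i}" and "{p, a} = {p, b}"
    moreover have "a \<noteq> p" "b \<noteq> p"
      using calculation assms by (auto simp: simple_graph_def)
    ultimately show "a = b" by (metis doubleton_eq_iff)
  qed
  moreover have "(\<lambda>i. {p, i}) ` {i\<in>V. E p i} \<subseteq> edges E"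
    by (auto simp: edges_def)
  ultimately show ?thesis
    using card_inj_on_le finite_edges[OF assms] by (fastforce simp: num_edges_def)
qed

lemma sum_adj_eq_sum_neighbours:
  fixes f :: "'a \<Rightarrow> int"
  assumes "finite V"
  shows "(\<Sum>i\<in>V. int (adj E p i) * f i) = (\<Sum>i\<in>{i\<in>V. E p i}. f i)"
  unfolding sum.inter_filter[OF assms] adj_def by (intro sum.cong) simp_all

lemma colorable_imp_coloring_ilp_solution:
  assumes graph: "simple_graph V E"
    and colours: "\<forall>v\<in>V. c v \<in> {1..k}"
    and proper: "\<forall>u\<in>V. \<forall>v\<in>V. E u v \<longrightarrow> c u \<noteq> c v"
  shows "coloring_ilp_solution V E k (\<lambda>i j. if c i = j then 1 else 0)"
    (is "coloring_ilp_solution V E k ?x")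
proof -
  have finV: "finite V"
    using graph by (simp add: simple_graph_def)
  have "(\<Sum>i\<in>{i\<in>V. E p i}. ?x i j) \<le> int (num_edges E) * (1 - ?x p j)"
    if "p \<in> V" for p j
  proof (cases "c p = j")
    case True
    then have "(\<Sum>i\<in>{i\<in>V. E p i}. ?x i j) = 0"
      using proper \<open>p \<in> V\<close> by (intro sum.neutral) fastforce
    with True show ?thesis by simp
  next
    case False
    have "(\<Sum>i\<in>{i\<in>V. E p i}. ?x i j) \<le> int (card {i\<in>V. E p i})"
      using sum_mono[of "{i\<in>V. E p i}" "\<lambda>i. ?x i j" "\<lambda>_. 1"] by simp
    also have "\<dots> \<le> int (num_edges E)"
      using card_neighbours_le_num_edges[OF graph] by simp
    finally show ?thesis using False by simp
  qed
  then show ?thesis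
    using colours
    by (auto simp: coloring_ilp_solution_def sum_adj_eq_sum_neighbours[OF finV] sum.delta)
qed

lemma coloring_ilp_solution_imp_colorable:
  assumes graph: "simple_graph V E"
    and sol: "coloring_ilp_solution V E k x"
  shows "colorable V E k"
proof -
  have finV: "finite V"
    using graph by (simp add: simple_graph_def)
  have binary: "\<forall>i\<in>V. \<forall>j\<in>{1..k}. x i j \<in> {0, 1}"
    and one_colour: "\<forall>i\<in>V. (\<Sum>j\<in>{1..k}. x i j) = 1"
    and rows: "\<forall>p\<in>V. \<forall>j\<in>{1..k}.
        (\<Sum>i\<in>V. int (adj E p i) * x i j) \<le> int (num_edges E) * (1 - x p j)"
    using sol by (simp_all add: coloring_ilp_solution_def)
  have "\<exists>j. j \<in> {1..k} \<and> x i j = 1" if "i \<in> V" for i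
  proof (rule ccontr)
    assume "\<not> ?thesis"
    then have "(\<Sum>j\<in>{1..k}. x i j) = 0"
      using binary that by (intro sum.neutral) auto
    with one_colour that show False by simp
  qed
  then obtain c where c: "\<forall>i\<in>V. c i \<in> {1..k} \<and> x i (c i) = 1"
    using bchoice[of V "\<lambda>i j. j \<in> {1..k} \<and> x i j = 1"] by blast
  have "c u \<noteq> c v" if "u \<in> V" "v \<in> V" "E u v" for u v
  proof
    assume same: "c u = c v"
    have "c u \<in> {1..k}" "x u (c u) = 1"
      using c \<open>u \<in> V\<close> by auto
    then have "(\<Sum>i\<in>V. int (adj E u i) * x i (c u)) \<le> 0"
      using rows \<open>u \<in> V\<close> by fastforce
    then have neighbours_le_0: "(\<Sum>i\<in>{i\<in>V. E u i}. x i (c u)) \<le> 0"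
      by (simp only: sum_adj_eq_sum_neighbours[OF finV])
    have nonneg: "\<forall>i\<in>{i\<in>V. E u i}. 0 \<le> x i (c u)"
      using binary c \<open>u \<in> V\<close> by fastforce
    have "x v (c u) \<le> (\<Sum>i\<in>{i\<in>V. E u i}. x i (c u))"
      using nonneg finV \<open>v \<in> V\<close> \<open>E u v\<close> by (intro member_le_sum) auto
    also note neighbours_le_0
    finally show False
      using c same \<open>v \<in> V\<close> by simp
  qed
  with c show ?thesis
    unfolding colorable_def by blast
qed

theorem lemma12:
  fixes V :: "'a set" and E :: "'a \<Rightarrow> 'a \<Rightarrow> bool" and k :: nat
  assumes "simple_graph V E" and "k \<ge> 1"
  shows "colorable V E k \<longleftrightarrow>
    (\<exists>x :: 'a \<Rightarrow> nat \<Rightarrow> int.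
       (\<forall>i\<in>V. \<forall>j\<in>{1..k}. x i j \<in> {0, 1}) \<and>
       (\<forall>i\<in>V. (\<Sum>j\<in>{1..k}. x i j) = 1) \<and>
       (\<forall>p\<in>V. \<forall>j\<in>{1..k}.
          (\<Sum>i\<in>V. int (adj E p i) * x i j) \<le> int (num_edges E) * (1 - x p j)))"
  unfolding coloring_ilp_solution_def[symmetric]
proof
  assume "colorable V E k"
  then show "\<exists>x. coloring_ilp_solution V E k x"
    unfolding colorable_def
    using colorable_imp_coloring_ilp_solution[OF assms(1)] by blast
next
  assume "\<exists>x. coloring_ilp_solution V E k x"
  then show "colorable V E k"
    using coloring_ilp_solution_imp_colorable[OF assms(1)] by blast
qed

end
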